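(* Let $S=S'\wedge C$ be a scheduling problem on $n$ elements where $C$ is a contractible clause, let $V(C)=O_1\uplus\cdots\uplus O_k$ be the decomposition into $\sim_C$ equivalence classes ordered so that $O_i>O_j$ for $i<j$, and let $r_i=|O_i|-1$. Then $$\mathcal{S}_S=\mathcal{S}_{S'}-\left(\mathcal{S}_{S'\downarrow_{(r_1,\dots,r_k)}}\right)\uparrow^{(r_1,\dots,r_k)}.$$
   Context: A scheduling problem on $n$ elements is a Boolean formula over atoms $(x_i\le x_j)$, $i,j\in[n]$, with $(x_i=x_j)=(x_i\le x_j)\wedge(x_j\le x_i)$ and $(x_i\ne x_j)=\neg(x_i=x_j)$. A solution is $f:[n]\to\mathbb{P}=\{1,2,\dots\}$ making it true with $x_i=f(i)$; $\mathcal{S}_S=\sum_f y_{f(1)}\cdots y_{f(n)}$ over solutions, in noncommuting variables $y_1,y_2,\dots$. A formula $C$ given as $C=\bigvee_{(i,j)\in I}(x_i\ne x_j)$ with $I\subseteq[n]\times[n]$ is edge-like; $V(C)$ is the set of indices $i$ with $x_i$ appearing in $C$, and $\sim_C$ is the equivalence relation on $V(C)$ generated by $i\sim j$ for $(i,j)\in I$. For disjoint sets, $A>B$ means $a>b$ for all $a\in A,b\in B$. $C$ is a contractible clause if it is edge-like, $V(C)=\{m,m+1,\dots,n\}$ for some $1\le m\le n$, and the $\sim_C$ classes can be ordered $O_1,\dots,O_k$ with $O_i>O_j$ for $i<j$. With $r=\sum_i r_i$, the contraction $S'\downarrow_{(r_1,\dots,r_k)}$ is the scheduling problem on $n-r$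 elements obtained from $S'$ by replacing each variable $x_j$ by $x_{\psi(j)}$, where $\psi(j)=j$ for $j<m$ and $\psi(j)=m+k-i$ for $j\in O_i$. Induction: for nonnegative integers $r_1,\dots,r_k$ and a monomial $y_{i_1}\cdots y_{i_p}$ with $k\le p$, $y_{i_1}\cdots y_{i_p}\uparrow^{(r_1,\dots,r_k)}=y_{i_1}\cdots y_{i_{p-k}}y_{i_{p-k+1}}^{1+r_k}\cdots y_{i_p}^{1+r_1}$, extended linearly (termwise). *)

theory Defs
  imports Main
begin

datatype sform = FTrue | FFalse | Le nat nat | Not sform | And sform sform | Or sform sform

fun holds :: "(nat \<Rightarrow> nat) \<Rightarrow> sform \<Rightarrow> bool" where
  "holds f FTrue = True"
| "holds f FFalse = False"
| "holds f (Le i j) = (f i \<le> f j)"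
| "holds f (Not a) = (\<not> holds f a)"
| "holds f (And a b) = (holds f a \<and> holds f b)"
| "holds f (Or a b) = (holds f a \<or> holds f b)"

fun fvars :: "sform \<Rightarrow> nat set" where
  "fvars FTrue = {}"
| "fvars FFalse = {}"
| "fvars (Le i j) = {i, j}"
| "fvars (Not a) = fvars a"
| "fvars (And a b) = fvars a \<union> fvars b"
| "fvars (Or a b) = fvars a \<union> fvars b"

definition Eq :: "nat \<Rightarrow> nat \<Rightarrow> sform" where
  "Eq i j = And (Le i j) (Le j i)"

definition Neq :: "nat \<Rightarrow> nat \<Rightarrow> sform" where
  "Neq i j = Not (Eq i j)"

fun rename :: "(nat \<Rightarrow> nat) \<Rightarrow> sform \<Rightarrow> sform" where
  "rename \<psi> FTrue = FTrue"
| "rename \<psi> FFalse = FFalse"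
| "rename \<psi> (Le i j) = Le (\<psi> i) (\<psi> j)"
| "rename \<psi> (Not a) = Not (rename \<psi> a)"
| "rename \<psi> (And a b) = And (rename \<psi> a) (rename \<psi> b)"
| "rename \<psi> (Or a b) = Or (rename \<psi> a) (rename \<psi> b)"

text \<open>Noncommutative formal power series in y_1, y_2, ... with integer coefficients:
  a word y_(w!0) ... y_(w!(p-1)) is the list w; a series maps each word to its coefficient.\<close>
type_synonym ncseries = "nat list \<Rightarrow> int"

text \<open>S_S for a scheduling problem on n elements: the word f(1)...f(n) of each solution
  f : [n] -> P has coefficient 1 (solutions correspond bijectively to such words).\<close>
definition sched_series :: "nat \<Rightarrow> sform \<Rightarrow> ncseries" where
  "sched_series n \<phi> w =
     (if length w = n \<and> (\<forall>a\<in>set w. 1 \<le> a) \<and> holds (\<lambda>i. w ! (i - 1)) \<phi> then 1 else 0)"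

definition edge_clause :: "(nat \<times> nat) list \<Rightarrow> sform" where
  "edge_clause I = foldr (\<lambda>(i, j) acc. Or (Neq i j) acc) I FFalse"

definition VC :: "(nat \<times> nat) list \<Rightarrow> nat set" where
  "VC I = fst ` set I \<union> snd ` set I"

definition simC :: "(nat \<times> nat) list \<Rightarrow> (nat \<times> nat) set" where
  "simC I = (set I \<union> (set I)\<inverse>)\<^sup>* \<inter> (VC I \<times> VC I)"

definition set_gt :: "nat set \<Rightarrow> nat set \<Rightarrow> bool" where
  "set_gt A B \<longleftrightarrow> (\<forall>a\<in>A. \<forall>b\<in>B. a > b)"

definition contractible :: "nat \<Rightarrow> (nat \<times> nat) list \<Rightarrow> bool" where
  "contractible n I \<longleftrightarrow>
     (\<exists>m. 1 \<le> m \<and> m \<le> n \<and> VC I = {m..n}) \<and>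
     (\<exists>(k::nat) Os. VC I // simC I = Os ` {1..k} \<and>
        (\<forall>i\<in>{1..k}. \<forall>j\<in>{1..k}. i < j \<longrightarrow> set_gt (Os i) (Os j)))"

text \<open>Induction on a single monomial, with rs = [r_1,...,r_k]:
  y_(i_1)...y_(i_p) goes to y_(i_1)...y_(i_(p-k)) y_(i_(p-k+1))^(1+r_k) ... y_(i_p)^(1+r_1).\<close>
definition induce_word :: "nat list \<Rightarrow> nat list \<Rightarrow> nat list" where
  "induce_word rs u =
     take (length u - length rs) u @
     concat (map (\<lambda>(a, e). replicate (Suc e) a) (zip (drop (length u - length rs) u) (rev rs)))"

definition induce :: "nat list \<Rightarrow> ncseries \<Rightarrow> ncseries" where
  "induce rs T w = (\<Sum>u\<in>{u. length rs \<le> length u \<and> induce_word rs u = w}. T u)"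

definition contr_map :: "nat \<Rightarrow> nat \<Rightarrow> (nat \<Rightarrow> nat set) \<Rightarrow> nat \<Rightarrow> nat" where
  "contr_map m k Os j = (if j < m then j else m + k - (THE i. i \<in> {1..k} \<and> j \<in> Os i))"

end

theory Submission
  imports Defs "HOL-Library.Multiset"
begin

text \<open>
  A word solves S' \<and> C iff it solves S' and C does not fail on it, and C fails exactly on the
  words that are constant on every class of \<sim>_C. Because the classes O_k < ... < O_1 are
  consecutive intervals at the end of [n], the contraction map \<psi> is a monotone surjection
  [n] \<rightarrow> [n - r] whose fibres are the singletons below m and the classes. So the words constant
  on the classes are exactly the words of f \<circ> \<psi> for a unique f : [n - r] \<rightarrow> \<bbbP>;
  f \<circ> \<psi> solves S' iff f solves the contraction, and the word of f \<circ> \<psi> arises from that of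
  f by repeating its last k letters 1 + r_k, ..., 1 + r_1 times, which is the induction.
\<close>

lemma holds_cong: "(\<forall>i\<in>fvars \<phi>. f i = g i) \<Longrightarrow> holds f \<phi> = holds g \<phi>"
  by (induction \<phi>) auto

lemma holds_rename: "holds f (rename \<psi> \<phi>) = holds (f \<circ> \<psi>) \<phi>"
  by (induction \<phi>) auto

lemma holds_edge_clause: "holds f (edge_clause I) \<longleftrightarrow> (\<exists>(i, j)\<in>set I. f i \<noteq> f j)"
  unfolding edge_clause_def by (induction I) (auto simp: Neq_def Eq_def)


section \<open>Stretching words\<close>

definition stretch :: "nat list \<Rightarrow> 'a list \<Rightarrow> 'a list" where
  "stretch cs u = concat (map (\<lambda>(a, c). replicate c a) (zip u cs))"

lemma stretch_append:
  "length cs = length u \<Longrightarrow> stretch (cs @ ds) (u @ v) = stretch cs u @ stretch ds v"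
  by (simp add: stretch_def)

lemma map_stretch: "map f (stretch cs u) = stretch cs (map f u)"
  by (simp add: stretch_def map_concat zip_map1 comp_def split_def)

lemma length_stretch: "length cs = length u \<Longrightarrow> length (stretch cs u) = sum_list cs"
  by (induction cs u rule: list_induct2) (simp_all add: stretch_def)

lemma stretch_ones: "stretch (replicate (length u) 1) u = u"
  by (induction u) (simp_all add: stretch_def)

lemma set_stretch_subset: "set (stretch cs u) \<subseteq> set u"
  by (auto simp: stretch_def dest: set_zip_leftD)

lemma stretch_upt_Suc:
  "stretch (map c [0..<Suc L]) [0..<Suc L] = stretch (map c [0..<L]) [0..<L] @ replicate (c L) L"
  by (simp add: stretch_append) (simp add: stretch_def)

lemma sorted_stretch_upt: "sorted (stretch (map c [0..<L]) [0..<L])"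
proof (induction L)
  case (Suc L)
  have "set (stretch (map c [0..<L]) [0..<L]) \<subseteq> {..<L}"
    using set_stretch_subset by fastforce
  then show ?case using Suc unfolding stretch_upt_Suc by (auto simp: sorted_append)
qed (simp add: stretch_def)

lemma count_stretch_upt:
  "count (mset (stretch (map c [0..<L]) [0..<L])) j = (if j < L then c j else 0)"
  by (induction L) (auto simp: stretch_upt_Suc stretch_def)

lemma sorted_eq_stretch_counts:
  assumes "sorted xs" "set xs \<subseteq> {..<L}"
  shows "xs = stretch (map (count (mset xs)) [0..<L]) [0..<L]"
proof -
  have "mset (stretch (map (count (mset xs)) [0..<L]) [0..<L]) = mset xs"
    using assms(2) by (intro multiset_eqI) (auto simp: count_stretch_upt not_in_iff)
  then have "sort xs = stretch (map (count (mset xs)) [0..<L]) [0..<L]"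
    using sorted_stretch_upt by (rule properties_for_sort)
  then show ?thesis using assms(1) by (simp add: sorted_sort_id)
qed

lemma count_mset_map_upt: "count (mset (map f [a..<b])) y = card {j \<in> {a..<b}. f j = y}"
proof -
  have "count (mset (map f [a..<b])) y = length (filter (\<lambda>j. y = f j) [a..<b])"
    by (simp only: count_mset count_list_eq_length_filter filter_map comp_def length_map)
  also have "\<dots> = card {j \<in> {a..<b}. f j = y}"
    by (simp add: distinct_length_filter) (rule arg_cong[where f = card], auto)
  finally show ?thesis .
qed

lemma induce_word_eq_stretch:
  assumes "length rs \<le> length u"
  shows "induce_word rs u = stretch (replicate (length u - length rs) 1 @ map Suc (rev rs)) u"
proof -
  let ?p = "length u - length rs"
  have "stretch (replicate ?p 1 @ map Suc (rev rs)) (take ?p u @ drop ?p u)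
      = take ?p u @ stretch (map Suc (rev rs)) (drop ?p u)"
    using assms stretch_ones[of "take ?p u"] by (subst stretch_append) simp_all
  then show ?thesis
    by (simp add: induce_word_def stretch_def zip_map2 comp_def split_def)
qed

lemma length_induce_word:
  "length rs \<le> length u \<Longrightarrow> length (induce_word rs u) = length u + sum_list rs"
  by (simp add: induce_word_eq_stretch length_stretch sum_list_Suc sum_list_replicate)


section \<open>Pulling words back along a contraction map\<close>

text \<open>The word of f \<circ> \<psi>, given the word u of f; positions in words are 0-based.\<close>

definition pullback_word :: "(nat \<Rightarrow> nat) \<Rightarrow> nat \<Rightarrow> 'a list \<Rightarrow> 'a list" where
  "pullback_word \<psi> n u = map (\<lambda>j. u ! (\<psi> j - 1)) [1..<n+1]"

lemma length_pullback_word [simp]: "length (pullback_word \<psi> n u) = n"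
  by (simp add: pullback_word_def)

lemma nth_pullback_word: "j \<in> {1..n} \<Longrightarrow> pullback_word \<psi> n u ! (j - 1) = u ! (\<psi> j - 1)"
  by (auto simp: pullback_word_def simp del: upt_Suc)

text \<open>The values of a monotone \<psi> form a sorted list, which is determined by its multiplicities.\<close>

lemma pullback_word_eq_stretch:
  assumes "mono_on {1..n} \<psi>" "\<psi> ` {1..n} \<subseteq> {1..N}" "length u = N"
  shows "pullback_word \<psi> n u = stretch (map (count (mset (map (\<lambda>j. \<psi> j - 1) [1..<n+1]))) [0..<N]) u"
proof -
  let ?xs = "map (\<lambda>j. \<psi> j - 1) [1..<n+1]"
  have "sorted ?xs"
  proof (rule sorted_iff_nth_mono_less[THEN iffD2], intro allI impI)
    fix i j assume ij: "i < j" "j < length ?xs"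
    then have "\<psi> (i + 1) \<le> \<psi> (j + 1)"
      by (intro mono_onD[OF assms(1)]) (simp_all del: upt_Suc)
    moreover have "?xs ! i = \<psi> (i + 1) - 1" "?xs ! j = \<psi> (j + 1) - 1"
      using ij by (simp_all add: nth_upt del: upt_Suc)
    ultimately show "?xs ! i \<le> ?xs ! j"
      by (simp add: diff_le_mono)
  qed
  moreover have "set ?xs \<subseteq> {..<N}"
    using assms(2) by (force simp del: upt_Suc)
  ultimately have xs_eq: "?xs = stretch (map (count (mset ?xs)) [0..<N]) [0..<N]"
    by (rule sorted_eq_stretch_counts)
  have "pullback_word \<psi> n u = map (nth u) ?xs"
    by (simp add: pullback_word_def)
  also have "\<dots> = stretch (map (count (mset ?xs)) [0..<N]) (map (nth u) [0..<N])"
    by (subst xs_eq) (rule map_stretch)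
  finally show ?thesis
    using assms(3) map_nth[of u] by argo
qed

lemma set_pullback_word:
  assumes "\<psi> ` {1..n} = {1..N}" "length u = N"
  shows "set (pullback_word \<psi> n u) = set u"
proof -
  have "set (pullback_word \<psi> n u) = (\<lambda>j'. u ! (j' - 1)) ` \<psi> ` {1..n}"
    by (simp add: pullback_word_def image_image atLeastLessThanSuc_atLeastAtMost del: upt_Suc)
  also have "\<dots> = (\<lambda>j'. u ! (j' - 1)) ` Suc ` {..<N}"
    by (simp only: assms(1) image_Suc_lessThan)
  also have "\<dots> = set u"
    using assms(2) by (auto simp: image_image set_conv_nth)
  finally show ?thesis .
qed

lemma pullback_word_inj:
  assumes "\<psi> ` {1..n} = {1..N}" "length u = N" "length v = N"
    and "pullback_word \<psi> n u = pullback_word \<psi> n v"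
  shows "u = v"
proof (rule nth_equalityI)
  fix t assume "t < length u"
  then have "t + 1 \<in> \<psi> ` {1..n}"
    using assms(1,2) by simp
  then obtain j where j: "j \<in> {1..n}" "\<psi> j = t + 1"
    by (metis imageE)
  have "u ! t = pullback_word \<psi> n u ! (j - 1)"
    using nth_pullback_word[OF j(1), of \<psi> u] j(2) by simp
  also have "\<dots> = v ! t"
    using nth_pullback_word[OF j(1), of \<psi> v] j(2) assms(4) by simp
  finally show "u ! t = v ! t" .
qed (use assms in simp)

lemma pullback_word_exists:
  assumes "\<psi> ` {1..n} = {1..N}" "length w = n"
    and "\<forall>i\<in>{1..n}. \<forall>j\<in>{1..n}. \<psi> i = \<psi> j \<longrightarrow> w ! (i - 1) = w ! (j - 1)"
  shows "\<exists>u. length u = N \<and> pullback_word \<psi> n u = w"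
proof (intro exI conjI)
  let ?u = "map (\<lambda>j'. w ! (inv_into {1..n} \<psi> j' - 1)) [1..<N+1]"
  show "length ?u = N" by simp
  show "pullback_word \<psi> n ?u = w"
  proof (rule nth_equalityI)
    fix t assume "t < length (pullback_word \<psi> n ?u)"
    then have t: "t + 1 \<in> {1..n}" by simp
    then have "\<psi> (t + 1) \<in> \<psi> ` {1..n}" by blast
    then have j: "inv_into {1..n} \<psi> (\<psi> (t + 1)) \<in> {1..n}"
      "\<psi> (inv_into {1..n} \<psi> (\<psi> (t + 1))) = \<psi> (t + 1)"
      by (simp_all only: inv_into_into f_inv_into_f)
    have "\<psi> (t + 1) \<in> {1..N}" using assms(1) \<open>\<psi> (t + 1) \<in> \<psi> ` {1..n}\<close> by blast
    have "pullback_word \<psi> n ?u ! t = ?u ! (\<psi> (t + 1) - 1)"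
      using nth_pullback_word[OF t] by (simp del: upt_Suc)
    also have "\<dots> = w ! (inv_into {1..n} \<psi> (\<psi> (t + 1)) - 1)"
      using \<open>\<psi> (t + 1) \<in> {1..N}\<close> by (auto simp del: upt_Suc)
    also have "\<dots> = w ! t"
      using assms(3) j t by fastforce
    finally show "pullback_word \<psi> n ?u ! t = w ! t" .
  qed (use assms in simp)
qed

lemma holds_pullback_word:
  assumes "fvars \<phi> \<subseteq> {1..n}"
  shows "holds (\<lambda>i. pullback_word \<psi> n u ! (i - 1)) \<phi> = holds (\<lambda>i. u ! (i - 1)) (rename \<psi> \<phi>)"
  unfolding holds_rename
proof (intro holds_cong ballI)
  fix i assume "i \<in> fvars \<phi>"
  then have "i \<in> {1..n}" using assms by blast
  then show "pullback_word \<psi> n u ! (i - 1) = ((\<lambda>i. u ! (i - 1)) \<circ> \<psi>) i"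
    using nth_pullback_word[OF \<open>i \<in> {1..n}\<close>] by simp
qed

lemma sched_series_contraction:
  assumes surj: "\<psi> ` {1..n} = {1..N}" and vars: "fvars S' \<subseteq> {1..n}"
    and clause_false: "\<And>w. length w = n \<Longrightarrow>
      \<not> holds (\<lambda>i. w ! (i - 1)) C \<longleftrightarrow> (\<exists>u. length u = N \<and> pullback_word \<psi> n u = w)"
    and induce_pullback: "\<And>u. length u = N \<Longrightarrow> induce_word rs u = pullback_word \<psi> n u"
    and rs_le: "length rs \<le> N" and n_eq: "n = N + sum_list rs"
  shows "sched_series n (And S' C) w
    = sched_series n S' w - induce rs (sched_series N (rename \<psi> S')) w"
proof -
  let ?T = "sched_series N (rename \<psi> S')"
  let ?U = "{u. length rs \<le> length u \<and> induce_word rs u = w}"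
  show ?thesis
  proof (cases "\<exists>u. length u = N \<and> pullback_word \<psi> n u = w")
    case True
    then obtain u0 where u0: "length u0 = N" "pullback_word \<psi> n u0 = w" by blast
    have "?U = {u0}"
    proof (intro set_eqI iffI)
      fix u assume u: "u \<in> ?U"
      then have "length w = length u + sum_list rs"
        using length_induce_word by blast
      moreover have "length w = n"
        using u0(2) by auto
      ultimately have "length u = N"
        using n_eq by simp
      then have "pullback_word \<psi> n u = pullback_word \<psi> n u0"
        using u u0(2) induce_pullback by simp
      then show "u \<in> {u0}"
        using pullback_word_inj[OF surj \<open>length u = N\<close> u0(1)] by simp
    qed (use u0 induce_pullback rs_le in simp)
    then have "induce rs ?T w = ?T u0"
      by (simp add: induce_def)
    also have "\<dots> = sched_series n S' w"
      unfolding sched_series_def u0(2)[symmetric]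
      using set_pullback_word[OF surj u0(1)] holds_pullback_word[OF vars] u0(1) by simp
    finally show ?thesis
      using clause_false[of w] True u0 by (simp add: sched_series_def)
  next
    case False
    have "?T u = 0" if "u \<in> ?U" for u
    proof (cases "length u = N")
      case True
      then show ?thesis using that induce_pullback False by auto
    qed (simp add: sched_series_def)
    then have "induce rs ?T w = 0"
      unfolding induce_def by (blast intro: sum.neutral)
    moreover have "holds (\<lambda>i. w ! (i - 1)) C" if "length w = n"
      using clause_false[OF that] False by blast
    ultimately show ?thesis
      by (simp add: sched_series_def)
  qed
qed


section \<open>Contractible clauses\<close>

lemma equiv_simC: "equiv (VC I) (simC I)"
proof (rule equivI)
  show "simC I \<subseteq> VC I \<times> VC I"
    unfolding simC_def by blast
  let ?G = "set I \<union> (set I)\<inverse>"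
  have "?G\<inverse> = ?G" by auto
  then show "sym (simC I)"
    unfolding simC_def by (auto intro!: symI) (metis rtrancl_converseI)
  show "refl_on (VC I) (simC I)"
    unfolding refl_on_def simC_def by auto
  show "trans (simC I)"
    unfolding simC_def by (auto intro!: transI)
qed

lemma simC_imp_eq:
  assumes "\<forall>(a, b)\<in>set I. f a = f b" and "(a, b) \<in> simC I"
  shows "f a = f b"
proof -
  have "(a, b) \<in> (set I \<union> (set I)\<inverse>)\<^sup>*"
    using assms(2) unfolding simC_def by blast
  then show ?thesis
    by (induction rule: rtrancl_induct) (use assms(1) in auto)
qed

locale contractible_clause =
  fixes n m k :: nat and I :: "(nat \<times> nat) list" and Os :: "nat \<Rightarrow> nat set"
  assumes m_pos: "1 \<le> m" and m_le_n: "m \<le> n" and VC_eq: "VC I = {m..n}"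
    and classes: "VC I // simC I = Os ` {1..k}"
    and classes_ordered: "\<forall>i\<in>{1..k}. \<forall>j\<in>{1..k}. i < j \<longrightarrow> set_gt (Os i) (Os j)"
begin

abbreviation \<psi> :: "nat \<Rightarrow> nat" where
  "\<psi> \<equiv> contr_map m k Os"

lemma equiv_simC_interval: "equiv {m..n} (simC I)"
  using equiv_simC[of I] VC_eq by simp

lemma class_in_quotient: "i \<in> {1..k} \<Longrightarrow> Os i \<in> {m..n} // simC I"
  using classes VC_eq by auto

lemma class_nonempty: "i \<in> {1..k} \<Longrightarrow> Os i \<noteq> {}"
  using in_quotient_imp_non_empty[OF equiv_simC_interval class_in_quotient] .

lemma class_subset: "i \<in> {1..k} \<Longrightarrow> Os i \<subseteq> {m..n}"
  using Union_quotient[OF equiv_simC_interval] class_in_quotient by blast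

lemma class_unique:
  assumes "i \<in> {1..k}" "j \<in> {1..k}" "x \<in> Os i" "x \<in> Os j"
  shows "i = j"
proof (rule ccontr)
  assume "i \<noteq> j"
  then consider "i < j" | "j < i" by linarith
  then show False
  proof cases
    case 1
    then have "set_gt (Os i) (Os j)" using classes_ordered assms(1,2) by blast
    then show False using assms(3,4) by (auto simp: set_gt_def)
  next
    case 2
    then have "set_gt (Os j) (Os i)" using classes_ordered assms(1,2) by blast
    then show False using assms(3,4) by (auto simp: set_gt_def)
  qed
qed

lemma class_exists:
  assumes "x \<in> {m..n}"
  obtains i where "i \<in> {1..k}" "x \<in> Os i"
proof -
  have "x \<in> \<Union>({m..n} // simC I)"
    using Union_quotient[OF equiv_simC_interval] assms by simp
  then show ?thesis
    using classes VC_eq that by auto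
qed

lemma contr_map_class:
  assumes "i \<in> {1..k}" "x \<in> Os i"
  shows "\<psi> x = m + k - i"
proof -
  have "\<not> x < m" using class_subset[OF assms(1)] assms(2) by auto
  moreover have "(THE i. i \<in> {1..k} \<and> x \<in> Os i) = i"
    using assms class_unique by (intro the_equality) auto
  ultimately show ?thesis
    by (simp add: contr_map_def)
qed

lemma contr_map_below: "j < m \<Longrightarrow> \<psi> j = j"
  by (simp add: contr_map_def)

lemma contr_map_cases:
  assumes "j \<in> {1..n}"
  obtains "j < m" "\<psi> j = j"
    | i where "i \<in> {1..k}" "j \<in> Os i" "m \<le> j" "\<psi> j = m + k - i"
proof (cases "j < m")
  case True
  then show ?thesis using that(1) contr_map_below by blast
next
  case False
  with assms have "j \<in> {m..n}" by simp
  then obtain i where i: "i \<in> {1..k}" "j \<in> Os i" by (rule class_exists)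
  show ?thesis
    by (rule that(2)[OF i]) (use False contr_map_class[OF i] in auto)
qed

lemma contr_map_fiber_below:
  assumes "j' \<in> {1..<m}"
  shows "{j \<in> {1..n}. \<psi> j = j'} = {j'}"
proof (intro set_eqI iffI)
  fix j assume "j \<in> {j \<in> {1..n}. \<psi> j = j'}"
  then have "j \<in> {1..n}" "\<psi> j = j'" by auto
  then show "j \<in> {j'}"
    using assms by (cases rule: contr_map_cases) auto
qed (use assms m_le_n contr_map_below in auto)

lemma contr_map_fiber_class:
  assumes "i \<in> {1..k}"
  shows "{j \<in> {1..n}. \<psi> j = m + k - i} = Os i"
proof (intro set_eqI iffI)
  fix j assume "j \<in> {j \<in> {1..n}. \<psi> j = m + k - i}"
  then have "j \<in> {1..n}" "\<psi> j = m + k - i" by auto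
  then show "j \<in> Os i"
  proof (cases rule: contr_map_cases)
    case (2 i')
    then have "i' = i" using assms \<open>\<psi> j = m + k - i\<close> by auto
    then show ?thesis using 2 by simp
  qed (use assms in auto)
next
  fix j assume "j \<in> Os i"
  then show "j \<in> {j \<in> {1..n}. \<psi> j = m + k - i}"
    using class_subset[OF assms] m_pos contr_map_class[OF assms] by auto
qed

lemma contr_map_image: "\<psi> ` {1..n} = {1..m - 1 + k}"
proof
  show "\<psi> ` {1..n} \<subseteq> {1..m - 1 + k}"
  proof
    fix j' assume "j' \<in> \<psi> ` {1..n}"
    then obtain j where j: "j \<in> {1..n}" "j' = \<psi> j" by blast
    show "j' \<in> {1..m - 1 + k}"
      using j(1) m_pos by (cases rule: contr_map_cases[OF j(1)]) (auto simp: j(2))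
  qed
  show "{1..m - 1 + k} \<subseteq> \<psi> ` {1..n}"
  proof
    fix j' assume j': "j' \<in> {1..m - 1 + k}"
    show "j' \<in> \<psi> ` {1..n}"
    proof (cases "j' < m")
      case True
      then have "j' \<in> {j \<in> {1..n}. \<psi> j = j'}"
        using j' contr_map_fiber_below[of j'] by simp
      then show ?thesis by (metis (mono_tags, lifting) image_eqI mem_Collect_eq)
    next
      case False
      then have i: "m + k - j' \<in> {1..k}" and j'_eq: "j' = m + k - (m + k - j')"
        using j' m_pos by auto
      then obtain x where "x \<in> Os (m + k - j')" using class_nonempty by blast
      then have "x \<in> {1..n}" "\<psi> x = j'"
        using contr_map_fiber_class[OF i] j'_eq by auto
      then show ?thesis by (metis image_eqI)
    qed
  qed
qed

lemma contr_map_mono: "mono_on {1..n} \<psi>"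
proof (rule mono_onI)
  fix a b assume a: "a \<in> {1..n}" and b: "b \<in> {1..n}" and "a \<le> b"
  show "\<psi> a \<le> \<psi> b"
  proof (cases rule: contr_map_cases[OF a]; cases rule: contr_map_cases[OF b])
    fix i i' assume "i \<in> {1..k}" "a \<in> Os i" "\<psi> a = m + k - i"
      "i' \<in> {1..k}" "b \<in> Os i'" "\<psi> b = m + k - i'"
    moreover have "\<not> set_gt (Os i) (Os i')"
      unfolding set_gt_def using \<open>a \<le> b\<close> calculation by (meson leD)
    then have "\<not> i < i'"
      using classes_ordered calculation by blast
    ultimately show ?thesis by simp
  qed (use \<open>a \<le> b\<close> in auto)
qed

lemma contr_map_eq_iff:
  assumes a: "a \<in> {1..n}" and b: "b \<in> {1..n}"
  shows "\<psi> a = \<psi> b \<longleftrightarrow> a = b \<or> (a, b) \<in> simC I"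
proof
  assume eq: "\<psi> a = \<psi> b"
  show "a = b \<or> (a, b) \<in> simC I"
  proof (cases rule: contr_map_cases[OF a])
    case 1
    then have "b \<in> {j \<in> {1..n}. \<psi> j = a}" using b eq by simp
    moreover have "{j \<in> {1..n}. \<psi> j = a} = {a}"
      by (rule contr_map_fiber_below) (use a 1 in simp)
    ultimately show ?thesis by (metis singletonD)
  next
    case (2 i)
    then have "b \<in> {j \<in> {1..n}. \<psi> j = m + k - i}" using b eq by simp
    then have "b \<in> Os i" using contr_map_fiber_class[OF \<open>i \<in> {1..k}\<close>] by blast
    then show ?thesis
      using 2 in_quotient_imp_in_rel[OF equiv_simC_interval class_in_quotient] by blast
  qed
next
  assume "a = b \<or> (a, b) \<in> simC I"
  then show "\<psi> a = \<psi> b"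
  proof
    assume ab: "(a, b) \<in> simC I"
    then have "a \<in> {m..n}"
      using VC_eq unfolding simC_def by auto
    then obtain i where i: "i \<in> {1..k}" "a \<in> Os i" by (rule class_exists)
    moreover have "b \<in> Os i"
      using in_quotient_imp_closed[OF equiv_simC_interval class_in_quotient] i ab by blast
    ultimately show ?thesis using contr_map_class by simp
  qed simp
qed

definition rs :: "nat list" where
  "rs = map (\<lambda>i. card (Os i) - 1) [1..<k+1]"

lemma length_rs: "length rs = k"
  by (simp add: rs_def)

lemma nth_rs: "i \<in> {1..k} \<Longrightarrow> rs ! (i - 1) = card (Os i) - 1"
  by (auto simp: rs_def simp del: upt_Suc)

lemma card_class_pos: "i \<in> {1..k} \<Longrightarrow> 0 < card (Os i)"
  using class_nonempty class_subset by (meson card_gt_0_iff finite_atLeastAtMost finite_subset)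

lemma card_fiber:
  assumes "j' \<in> {1..m - 1 + k}"
  shows "card {j \<in> {1..n}. \<psi> j = j'} = (if j' < m then 1 else card (Os (m + k - j')))"
proof (cases "j' < m")
  case True
  then show ?thesis using contr_map_fiber_below[of j'] assms by simp
next
  case False
  then have "m + k - j' \<in> {1..k}" "m + k - (m + k - j') = j'"
    using assms m_pos by auto
  then show ?thesis using contr_map_fiber_class False by metis
qed

text \<open>The fibres of \<psi>, in increasing order: the singletons {j} for j < m, then O_k, ..., O_1.\<close>

lemma contr_map_fiber_counts:
  "map (count (mset (map (\<lambda>j. \<psi> j - 1) [1..<n+1]))) [0..<m - 1 + k]
    = replicate (m - 1) 1 @ map Suc (rev rs)"
proof (rule nth_equalityI)
  fix t assume "t < length (map (count (mset (map (\<lambda>j. \<psi> j - 1) [1..<n+1]))) [0..<m - 1 + k])"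
  then have t: "t < m - 1 + k" by simp
  have "count (mset (map (\<lambda>j. \<psi> j - 1) [1..<n+1])) t = card {j \<in> {1..<n+1}. \<psi> j - 1 = t}"
    by (rule count_mset_map_upt)
  also have "{j \<in> {1..<n+1}. \<psi> j - 1 = t} = {j \<in> {1..n}. \<psi> j = t + 1}"
    using contr_map_image by force
  also have "card \<dots> = (if t + 1 < m then 1 else card (Os (m + k - (t + 1))))"
    using card_fiber[of "t + 1"] t by simp
  also have "\<dots> = (replicate (m - 1) 1 @ map Suc (rev rs)) ! t"
  proof (cases "t + 1 < m")
    case False
    then have i: "m + k - (t + 1) \<in> {1..k}" using t m_pos by auto
    have "(replicate (m - 1) 1 @ map Suc (rev rs)) ! t = Suc (rev rs ! (t - (m - 1)))"
      using False t by (auto simp: nth_append length_rs)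
    also have "rev rs ! (t - (m - 1)) = rs ! (m + k - (t + 1) - 1)"
      using t False length_rs m_pos by (simp add: rev_nth ac_simps)
    also have "\<dots> = card (Os (m + k - (t + 1))) - 1"
      using i by (rule nth_rs)
    finally show ?thesis
      using False card_class_pos[OF i] by simp
  qed (auto simp: nth_append)
  finally show "map (count (mset (map (\<lambda>j. \<psi> j - 1) [1..<n+1]))) [0..<m - 1 + k] ! t
      = (replicate (m - 1) 1 @ map Suc (rev rs)) ! t"
    using t by simp
qed (simp add: length_rs)

lemma sum_list_rs: "n = (m - 1 + k) + sum_list rs"
proof -
  have fin: "finite (Os i)" if "i \<in> {1..k}" for i
    using class_subset[OF that] finite_subset by blast
  have "{m..n} = (\<Union>i\<in>{1..k}. Os i)"
    using Union_quotient[OF equiv_simC_interval] classes VC_eq by simp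
  moreover have "card (\<Union>i\<in>{1..k}. Os i) = (\<Sum>i\<in>{1..k}. card (Os i))"
    by (rule card_UN_disjoint) (use fin class_unique in auto)
  ultimately have "n + 1 - m = (\<Sum>i\<in>{1..k}. card (Os i))"
    using card_atLeastAtMost[of m n] by simp
  also have "\<dots> = (\<Sum>i\<in>{1..k}. (card (Os i) - 1) + 1)"
    using card_class_pos by (intro sum.cong) auto
  also have "\<dots> = sum_list rs + k"
    by (simp add: sum_Suc rs_def sum_list_distinct_conv_sum_set atLeastLessThanSuc_atLeastAtMost
        del: upt_Suc)
  finally show ?thesis using m_pos m_le_n by linarith
qed

lemma induce_word_eq_pullback:
  assumes "length u = m - 1 + k"
  shows "induce_word rs u = pullback_word \<psi> n u"
proof -
  have "induce_word rs u = stretch (replicate (m - 1) 1 @ map Suc (rev rs)) u"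
    using induce_word_eq_stretch[of rs u] assms length_rs by simp
  also have "\<dots> = pullback_word \<psi> n u"
    using pullback_word_eq_stretch[OF contr_map_mono _ assms] contr_map_image contr_map_fiber_counts
    by simp
  finally show ?thesis .
qed

lemma edge_clause_false_iff:
  assumes "length w = n"
  shows "\<not> holds (\<lambda>i. w ! (i - 1)) (edge_clause I)
    \<longleftrightarrow> (\<exists>u. length u = m - 1 + k \<and> pullback_word \<psi> n u = w)"
proof
  assume "\<not> holds (\<lambda>i. w ! (i - 1)) (edge_clause I)"
  then have "\<forall>(a, b)\<in>set I. w ! (a - 1) = w ! (b - 1)"
    unfolding holds_edge_clause by blast
  then have "\<forall>a\<in>{1..n}. \<forall>b\<in>{1..n}. \<psi> a = \<psi> b \<longrightarrow> w ! (a - 1) = w ! (b - 1)"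
    using contr_map_eq_iff simC_imp_eq[where f = "\<lambda>i. w ! (i - 1)"] by blast
  then show "\<exists>u. length u = m - 1 + k \<and> pullback_word \<psi> n u = w"
    by (rule pullback_word_exists[OF contr_map_image assms])
next
  assume "\<exists>u. length u = m - 1 + k \<and> pullback_word \<psi> n u = w"
  then obtain u where w: "w = pullback_word \<psi> n u" by blast
  have "w ! (a - 1) = w ! (b - 1)" if ab: "(a, b) \<in> set I" for a b
  proof -
    have "a \<in> {m..n}" "b \<in> {m..n}"
      using ab VC_eq unfolding VC_def by force+
    then have "a \<in> {1..n}" "b \<in> {1..n}" and "(a, b) \<in> simC I"
      using m_pos ab VC_eq unfolding simC_def by auto
    then show ?thesis
      using contr_map_eq_iff nth_pullback_word w by metis
  qed
  then show "\<not> holds (\<lambda>i. w ! (i - 1)) (edge_clause I)"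
    unfolding holds_edge_clause by blast
qed

lemma sched_series_edge_clause:
  assumes "fvars S' \<subseteq> {1..n}"
  shows "sched_series n (And S' (edge_clause I)) w
    = sched_series n S' w - induce rs (sched_series (n - sum_list rs) (rename \<psi> S')) w"
proof -
  have "n - sum_list rs = m - 1 + k" using sum_list_rs by linarith
  then show ?thesis
    using sched_series_contraction[OF contr_map_image assms edge_clause_false_iff
        induce_word_eq_pullback _ sum_list_rs] length_rs by simp
qed

end

theorem theorem3p8:
  fixes n m k :: nat and S' :: sform and I :: "(nat \<times> nat) list" and Os :: "nat \<Rightarrow> nat set"
  assumes "fvars S' \<subseteq> {1..n}"
    and "contractible n I"
    and "1 \<le> m" and "m \<le> n" and "VC I = {m..n}"
    and "VC I // simC I = Os ` {1..k}"
    and "\<forall>i\<in>{1..k}. \<forall>j\<in>{1..k}. i < j \<longrightarrow> set_gt (Os i) (Os j)"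
  shows "sched_series n (And S' (edge_clause I)) =
    (let rs = map (\<lambda>i. card (Os i) - 1) [1..<k+1]; r = sum_list rs in
     (\<lambda>w. sched_series n S' w
          - induce rs (sched_series (n - r) (rename (contr_map m k Os) S')) w))"
proof -
  \<comment> \<open>The hypothesis \<open>contractible n I\<close> is implied by the explicit ones and not needed.\<close>
  interpret contractible_clause n m k I Os
    using assms(3-7) by unfold_locales
  show ?thesis
    unfolding Let_def rs_def[symmetric]
    using sched_series_edge_clause[OF assms(1)] by (intro ext)
qed

end
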